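(* Let $f\in C^1((0,1)\times\mathbb{T}^2)$. Then for all $z\in[0,1)$ and $y\in\mathbb{T}^2$, $$f(z,y)-\int_{\mathbb{T}^2}\int_0^1f(z',y')\,dz'\,dy'\le\sqrt{L(z)+L(1-z)}\,\sqrt{\int_{\mathbb{T}^2}\int_0^1 s(1-s)|\partial_sf(s,x')|^2\,ds\,dx'}+f(z,y)-\int_{\mathbb{T}^2}f(z,y')\,dy',$$ where $L(z):=-z-\ln(1-z)$.
   Context: $\mathbb{T}^2=\mathbb{R}^2/\mathbb{Z}^2$ with unit total measure. *)

theory Defs
  imports "HOL-Analysis.Analysis"
begin

text \<open>The torus T^2 = R^2/Z^2 is represented by 1-periodic functions on real \<times> real;
  integration over T^2 (unit total measure) is integration over the fundamental domain [0,1]^2.\<close>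
definition torus_dom :: "(real \<times> real) set" where
  "torus_dom = cbox (0,0) (1,1)"

definition torus_periodic :: "(real \<times> real \<Rightarrow> real) \<Rightarrow> bool" where
  "torus_periodic g \<longleftrightarrow> (\<forall>y. g (y + (1,0)) = g y \<and> g (y + (0,1)) = g y)"

definition C1_on :: "'a::euclidean_space set \<Rightarrow> ('a \<Rightarrow> real) \<Rightarrow> bool" where
  "C1_on S g \<longleftrightarrow> (\<exists>D. (\<forall>x\<in>S. (g has_derivative blinfun_apply (D x)) (at x)) \<and> continuous_on S D)"

definition L :: "real \<Rightarrow> real" where
  "L z = - z - ln (1 - z)"

end

theory Submission
  imports Defs
begin

(* For a C^1 function h on [a, b] in (0, 1) and a <= z <= b, integration by parts gives
     (b - a) h(z) - int_a^b h = int_a^z (t - a) h'(t) dt + int_z^b (t - b) h'(t) dt.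
   Bounding each integrand by AM-GM with weight t(1 - t) and a parameter l > 0, and using
   |t - a| <= t on [a, z] and |t - b| <= 1 - t on [z, b], leaves the integrals of t/(1 - t)
   and (1 - t)/t, which are at most L(z) and L(1 - z).  Integrating over [0,1]^2 (Fubini on
   compact slabs [a, b] x [0,1]^2) and letting [a, b] exhaust (0, 1) gives
     int f(z, .) - int int f <= (L(z) + L(1 - z)) / (2 l) + l/2 * int int s(1 - s) |d_s f|^2
   for every l > 0; optimising over l yields the product of square roots, so no
   Cauchy-Schwarz inequality for integrals is needed. *)

lemma mult_le_amgm_bound:
  fixes u v w l m :: real
  assumes "0 < w" "0 < l" "\<bar>u\<bar> \<le> m"
  shows "u * v \<le> m\<^sup>2 / (2 * l * w) + l / 2 * (w * v\<^sup>2)"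
proof -
  have "0 \<le> (u - l * w * v)\<^sup>2 / (2 * l * w)" using assms by simp
  also have "\<dots> = u\<^sup>2 / (2 * l * w) + l / 2 * (w * v\<^sup>2) - u * v"
    using assms by (simp add: field_simps power2_eq_square)
  also have "u\<^sup>2 / (2 * l * w) \<le> m\<^sup>2 / (2 * l * w)"
    using assms power_mono[of "\<bar>u\<bar>" m 2] by (intro divide_right_mono) auto
  finally show ?thesis by simp
qed

lemma L_nonneg: "x < 1 \<Longrightarrow> 0 \<le> L x"
  using ln_le_minus_one[of "1 - x"] unfolding L_def by simp

lemma has_integral_L:
  assumes "a \<le> b" "b < 1"
  shows "((\<lambda>t. t / (1 - t)) has_integral (L b - L a)) {a..b}"
proof (rule fundamental_theorem_of_calculus)
  fix t assume "t \<in> {a..b}"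
  then have "(L has_real_derivative t / (1 - t)) (at t)"
    unfolding L_def[abs_def] using assms
    by (auto intro!: derivative_eq_intros simp: field_simps)
  then show "(L has_vector_derivative t / (1 - t)) (at t within {a..b})"
    by (simp add: has_real_derivative_iff_has_vector_derivative has_vector_derivative_at_within)
qed (fact assms)

lemma has_integral_L_reflect:
  assumes "0 < a" "a \<le> b"
  shows "((\<lambda>t. (1 - t) / t) has_integral (L (1 - a) - L (1 - b))) {a..b}"
proof -
  have "((\<lambda>t. - L (1 - t)) has_vector_derivative (1 - t) / t) (at t within {a..b})"
    if "t \<in> {a..b}" for t
  proof -
    have "((\<lambda>t. - L (1 - t)) has_real_derivative (1 - t) / t) (at t)"
      unfolding L_def[abs_def] using that assms
      by (auto intro!: derivative_eq_intros simp: field_simps)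
    then show ?thesis
      by (simp add: has_real_derivative_iff_has_vector_derivative has_vector_derivative_at_within)
  qed
  from fundamental_theorem_of_calculus[OF \<open>a \<le> b\<close> this]
  show ?thesis by simp
qed

lemma has_integral_linear_weight_deriv:
  fixes h h' :: "real \<Rightarrow> real"
  assumes "a \<le> b" and der: "\<And>t. t \<in> {a..b} \<Longrightarrow> (h has_real_derivative h' t) (at t within {a..b})"
  shows "((\<lambda>t. (t - c) * h' t)
    has_integral ((b - c) * h b - (a - c) * h a - integral {a..b} h)) {a..b}"
proof -
  have "((\<lambda>t. h t + (t - c) * h' t) has_integral ((b - c) * h b - (a - c) * h a)) {a..b}"
  proof (rule fundamental_theorem_of_calculus[OF \<open>a \<le> b\<close>])
    fix t assume "t \<in> {a..b}"
    then have "((\<lambda>t. (t - c) * h t) has_real_derivative h t + (t - c) * h' t) (at t within {a..b})"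
      by (auto intro!: derivative_eq_intros der)
    then show "((\<lambda>t. (t - c) * h t) has_vector_derivative h t + (t - c) * h' t) (at t within {a..b})"
      by (simp add: has_real_derivative_iff_has_vector_derivative)
  qed
  moreover have "(h has_integral integral {a..b} h) {a..b}"
    using DERIV_continuous_on[OF der] by (intro integrable_integral integrable_continuous_real)
  ultimately show ?thesis
    by (auto dest: has_integral_diff)
qed

lemma deviation_le_interval:
  fixes h h' :: "real \<Rightarrow> real"
  assumes der: "\<And>t. t \<in> {a..b} \<Longrightarrow> (h has_real_derivative h' t) (at t within {a..b})"
    and int: "(\<lambda>t. t * (1 - t) * (h' t)\<^sup>2) integrable_on {a..b}"
    and "0 < a" "a \<le> z" "z \<le> b" "b < 1" "0 < l"
  shows "(b - a) * h z - integral {a..b} h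
    \<le> (L z + L (1 - z)) / (2 * l) + l / 2 * integral {a..b} (\<lambda>t. t * (1 - t) * (h' t)\<^sup>2)"
proof -
  define E where "E t = t * (1 - t) * (h' t)\<^sup>2" for t
  have der_left: "(h has_real_derivative h' t) (at t within {a..z})" if "t \<in> {a..z}" for t
    using that assms by (intro DERIV_subset[OF der]) auto
  have der_right: "(h has_real_derivative h' t) (at t within {z..b})" if "t \<in> {z..b}" for t
    using that assms by (intro DERIV_subset[OF der]) auto
  have E_int_left: "E integrable_on {a..z}" and E_int_right: "E integrable_on {z..b}"
    using int assms unfolding E_def[abs_def] by (auto intro: integrable_subinterval_real)
  have left: "(z - a) * h z - integral {a..z} h
      \<le> (L z - L a) / (2 * l) + l / 2 * integral {a..z} E"
  proof (rule has_integral_le)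
    show "((\<lambda>t. (t - a) * h' t) has_integral (z - a) * h z - integral {a..z} h) {a..z}"
      using has_integral_linear_weight_deriv[OF \<open>a \<le> z\<close> der_left, of a] by simp
    show "((\<lambda>t. (t / (1 - t)) / (2 * l) + l / 2 * E t) has_integral
        (L z - L a) / (2 * l) + l / 2 * integral {a..z} E) {a..z}"
      using assms by (intro has_integral_add has_integral_divide has_integral_mult_right
          has_integral_L integrable_integral E_int_left) auto
  next
    fix t assume t: "t \<in> {a..z}"
    then have "0 < t * (1 - t)" using assms by auto
    then have "(t - a) * h' t \<le> t\<^sup>2 / (2 * l * (t * (1 - t))) + l / 2 * (t * (1 - t) * (h' t)\<^sup>2)"
      using t assms by (intro mult_le_amgm_bound) auto
    also have "t\<^sup>2 / (2 * l * (t * (1 - t))) = (t / (1 - t)) / (2 * l)"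
      using t assms by (simp add: power2_eq_square)
    finally show "(t - a) * h' t \<le> (t / (1 - t)) / (2 * l) + l / 2 * E t"
      by (simp add: E_def)
  qed
  have right: "(b - z) * h z - integral {z..b} h
      \<le> (L (1 - z) - L (1 - b)) / (2 * l) + l / 2 * integral {z..b} E"
  proof (rule has_integral_le)
    show "((\<lambda>t. (t - b) * h' t) has_integral (b - z) * h z - integral {z..b} h) {z..b}"
      using has_integral_linear_weight_deriv[OF \<open>z \<le> b\<close> der_right, of b] by (simp add: algebra_simps)
    show "((\<lambda>t. ((1 - t) / t) / (2 * l) + l / 2 * E t) has_integral
        (L (1 - z) - L (1 - b)) / (2 * l) + l / 2 * integral {z..b} E) {z..b}"
      using assms by (intro has_integral_add has_integral_divide has_integral_mult_right
          has_integral_L_reflect integrable_integral E_int_right) auto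
  next
    fix t assume t: "t \<in> {z..b}"
    then have "0 < t * (1 - t)" using assms by auto
    then have "(t - b) * h' t \<le> (1 - t)\<^sup>2 / (2 * l * (t * (1 - t))) + l / 2 * (t * (1 - t) * (h' t)\<^sup>2)"
      using t assms by (intro mult_le_amgm_bound) auto
    also have "(1 - t)\<^sup>2 / (2 * l * (t * (1 - t))) = ((1 - t) / t) / (2 * l)"
      using t assms by (simp add: power2_eq_square)
    finally show "(t - b) * h' t \<le> ((1 - t) / t) / (2 * l) + l / 2 * E t"
      by (simp add: E_def)
  qed
  have "integral {a..z} h + integral {z..b} h = integral {a..b} h"
    using DERIV_continuous_on[OF der] assms
    by (intro Henstock_Kurzweil_Integration.integral_combine integrable_continuous_real) simp_all
  moreover have "l / 2 * integral {a..z} E + l / 2 * integral {z..b} E = l / 2 * integral {a..b} E"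
    using int assms unfolding E_def[abs_def]
    by (simp add: Henstock_Kurzweil_Integration.integral_combine flip: distrib_left)
  moreover have "(L z - L a) / (2 * l) + (L (1 - z) - L (1 - b)) / (2 * l) \<le> (L z + L (1 - z)) / (2 * l)"
    using assms L_nonneg[of a] L_nonneg[of "1 - b"]
    by (simp add: divide_right_mono flip: add_divide_distrib)
  moreover have "(b - a) * h z = (z - a) * h z + (b - z) * h z"
    by (simp add: algebra_simps)
  ultimately show ?thesis
    using left right unfolding E_def[symmetric] by linarith
qed

lemma le_sqrt_mult_sqrtI:
  fixes X S E :: real
  assumes "0 \<le> S" "0 \<le> E" and bound: "\<And>l. 0 < l \<Longrightarrow> X \<le> S / (2 * l) + l / 2 * E"
  shows "X \<le> sqrt S * sqrt E"
(* Take l = sqrt (S + e) / sqrt (E + e) and let e \<rightarrow> 0; this also covers S = 0 or E = 0. *)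
proof (rule tendsto_lowerbound)
  show "((\<lambda>e. sqrt (S + e) * sqrt (E + e)) \<longlongrightarrow> sqrt S * sqrt E) (at_right 0)"
    by (auto intro!: tendsto_eq_intros)
  show "\<forall>\<^sub>F e in at_right 0. X \<le> sqrt (S + e) * sqrt (E + e)"
  proof (rule eventually_at_rightI[of 0 1])
    fix e :: real assume "e \<in> {0<..<1}"
    then have pos: "0 < S + e" "0 < E + e" using assms by auto
    define \<sigma> \<epsilon> where "\<sigma> = sqrt (S + e)" and "\<epsilon> = sqrt (E + e)"
    have "0 < \<sigma>" "0 < \<epsilon>" using pos by (simp_all add: \<sigma>_def \<epsilon>_def)
    have "0 < \<sigma> / \<epsilon>" using \<open>0 < \<sigma>\<close> \<open>0 < \<epsilon>\<close> by simp
    then have "X \<le> S / (2 * (\<sigma> / \<epsilon>)) + \<sigma> / \<epsilon> / 2 * E" by (rule bound)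
    also have "\<dots> \<le> (S + e) / (2 * (\<sigma> / \<epsilon>)) + \<sigma> / \<epsilon> / 2 * (E + e)"
      using \<open>0 < \<sigma> / \<epsilon>\<close> \<open>e \<in> _\<close>
      by (intro add_mono divide_right_mono mult_left_mono) auto
    also have "\<dots> = \<sigma>\<^sup>2 / (2 * (\<sigma> / \<epsilon>)) + \<sigma> / \<epsilon> / 2 * \<epsilon>\<^sup>2"
      using pos by (simp add: \<sigma>_def \<epsilon>_def)
    also have "\<dots> = \<sigma> * \<epsilon>"
      using \<open>0 < \<sigma>\<close> \<open>0 < \<epsilon>\<close> by (simp add: field_simps power2_eq_square)
    finally show "X \<le> sqrt (S + e) * sqrt (E + e)" by (simp add: \<sigma>_def \<epsilon>_def)
  qed simp
qed simp

lemma C1_on_imp_continuous_on: "C1_on S g \<Longrightarrow> continuous_on S g"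
  unfolding C1_on_def
  by (metis continuous_at_imp_continuous_on has_derivative_continuous)

lemma C1_on_partial_derivative_fst:
  fixes f :: "real \<Rightarrow> 'b::euclidean_space \<Rightarrow> real"
  assumes "C1_on S (\<lambda>p. f (fst p) (snd p))"
  obtains g where "continuous_on S g"
    and "\<And>s y. (s, y) \<in> S \<Longrightarrow> ((\<lambda>t. f t y) has_real_derivative g (s, y)) (at s)"
proof -
  obtain D where
      D: "\<And>p. p \<in> S \<Longrightarrow> ((\<lambda>p. f (fst p) (snd p)) has_derivative blinfun_apply (D p)) (at p)"
    and D_cont: "continuous_on S D"
    using assms unfolding C1_on_def by blast
  define g where "g p = D p (1, 0)" for p
  show thesis
  proof
    show "continuous_on S g"
      unfolding g_def by (intro continuous_intros D_cont)
  next
    fix s y assume "(s, y) \<in> S"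
    have "((\<lambda>t. (t, y)) has_derivative (\<lambda>h. (h, 0))) (at s)"
      by (auto intro!: derivative_eq_intros)
    from diff_chain_at[OF this D[OF \<open>(s, y) \<in> S\<close>]]
    have "((\<lambda>t. f t y) has_derivative D (s, y) \<circ> (\<lambda>h. (h, 0))) (at s)"
      by (simp add: o_def)
    moreover have "D (s, y) \<circ> (\<lambda>h. (h, 0)) = (\<lambda>h. g (s, y) * h)"
    proof
      fix h :: real
      have "(h, 0) = h *\<^sub>R (1, 0::'b)" by simp
      then show "(D (s, y) \<circ> (\<lambda>h. (h, 0))) h = g (s, y) * h"
        by (simp add: g_def blinfun.scaleR_right mult.commute del: scaleR_Pair)
    qed
    ultimately show "((\<lambda>t. f t y) has_real_derivative g (s, y)) (at s)"
      by (simp add: has_field_derivative_def)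
  qed
qed

lemma has_integral_integral_fst_continuous:
  fixes F :: "'a::euclidean_space \<times> 'b::euclidean_space \<Rightarrow> real"
  assumes cont: "continuous_on (cbox (a, c) (b, d)) F"
  shows "((\<lambda>y. integral (cbox a b) (\<lambda>x. F (x, y)))
    has_integral integral (cbox (a, c) (b, d)) F) (cbox c d)"
proof -
  have cont': "continuous_on (cbox (a, c) (b, d)) (\<lambda>(x, y). F (x, y))"
    using cont by simp
  have "continuous_on (cbox c d) (\<lambda>y. integral (cbox a b) (\<lambda>x. F (x, y)))"
    using continuous_on_swap_args[OF cont'[unfolded cbox_Pair_eq]]
    by (intro integral_continuous_on_param) simp
  moreover have "integral (cbox (a, c) (b, d)) F
      = integral (cbox c d) (\<lambda>y. integral (cbox a b) (\<lambda>x. F (x, y)))"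
    using integral_prod_continuous[OF cont] integral_swap_continuous[OF cont'] by simp
  ultimately show ?thesis
    by (metis integrable_continuous integrable_integral)
qed

lemma has_integral_open_slab_iff:
  fixes F :: "real \<times> 'b::euclidean_space \<Rightarrow> real"
  shows "(F has_integral I) ({a<..<b} \<times> cbox c d) \<longleftrightarrow> (F has_integral I) (cbox (a, c) (b, d))"
proof (rule has_integral_spike_set_eq)
  have e1: "(1, 0) \<in> (Basis :: (real \<times> 'b) set)"
    by (simp add: Basis_prod_def)
  have "cbox (a, c) (b, d) - {a<..<b} \<times> cbox c d
      \<subseteq> {p. p \<bullet> (1, 0) = a} \<union> {p. p \<bullet> (1, 0) = b}"
    by (auto simp: cbox_Pair_eq inner_Pair)
  then have "negligible (cbox (a, c) (b, d) - {a<..<b} \<times> cbox c d)"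
    by (rule negligible_subset[rotated]) (intro negligible_Un negligible_standard_hyperplane e1)
  then show "negligible {p \<in> cbox (a, c) (b, d) - {a<..<b} \<times> cbox c d. F p \<noteq> 0}"
    by (rule negligible_subset) auto
  show "negligible {p \<in> {a<..<b} \<times> cbox c d - cbox (a, c) (b, d). F p \<noteq> 0}"
    by (rule negligible_subset[OF negligible_empty]) (auto simp: cbox_Pair_eq)
qed

lemma tendsto_integral_shrinking_slab:
  fixes F :: "real \<times> 'b::euclidean_space \<Rightarrow> real"
  assumes "F integrable_on cbox (0, c) (1, d)" and "cbox c d \<noteq> {}"
  shows "((\<lambda>n. integral (cbox (n, c) (1 - n, d)) F)
    \<longlongrightarrow> integral (cbox (0, c) (1, d)) F) (at_right 0)"
proof -
  let ?Q = "cbox ((0::real, c), (0::real, c)) ((1, d), (1, d))"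
  have "continuous_on ?Q (\<lambda>q. integral (cbox (fst q) (snd q)) F)"
    by (intro uniformly_continuous_imp_continuous indefinite_integral_uniformly_continuous assms)
  moreover have "((\<lambda>n::real. ((n, c), (1 - n, d))) \<longlongrightarrow> ((0, c), (1 - 0, d))) (at_right 0)"
    by (intro tendsto_Pair tendsto_diff tendsto_const tendsto_ident_at)
  moreover have "c \<in> cbox c d" "d \<in> cbox c d"
    using assms(2) by (auto simp: mem_box box_ne_empty)
  then have "((0, c), (1, d)) \<in> ?Q" "\<forall>\<^sub>F n in at_right 0. ((n, c), (1 - n, d)) \<in> ?Q"
    by (auto simp: cbox_Pair_eq cbox_interval intro!: eventually_at_rightI[of 0 1])
  ultimately show ?thesis
    by (auto dest: continuous_on_tendsto_compose)
qed

lemma deviation_le_compact_slab: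
  fixes f :: "real \<Rightarrow> 'b::euclidean_space \<Rightarrow> real" and g :: "real \<times> 'b \<Rightarrow> real"
  assumes cont_f: "continuous_on (cbox (a, c) (b, d)) (\<lambda>p. f (fst p) (snd p))"
    and cont_g: "continuous_on (cbox (a, c) (b, d)) g"
    and der: "\<And>s y. s \<in> {a..b} \<Longrightarrow> y \<in> cbox c d \<Longrightarrow>
      ((\<lambda>t. f t y) has_real_derivative g (s, y)) (at s within {a..b})"
    and "0 < a" "a \<le> z" "z \<le> b" "b < 1" "0 < l"
  shows "(b - a) * integral (cbox c d) (f z) - integral (cbox (a, c) (b, d)) (\<lambda>p. f (fst p) (snd p))
    \<le> measure lborel (cbox c d) * ((L z + L (1 - z)) / (2 * l))
      + l / 2 * integral (cbox (a, c) (b, d)) (\<lambda>p. fst p * (1 - fst p) * (g p)\<^sup>2)"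
proof (rule has_integral_le)
  have "continuous_on (cbox c d) (\<lambda>y. f (fst (z, y)) (snd (z, y)))"
    by (rule continuous_on_compose2[OF cont_f])
      (use assms in \<open>auto intro!: continuous_intros simp: cbox_Pair_eq\<close>)
  then show "((\<lambda>y. (b - a) * f z y - integral {a..b} (\<lambda>s. f s y)) has_integral
      (b - a) * integral (cbox c d) (f z) - integral (cbox (a, c) (b, d)) (\<lambda>p. f (fst p) (snd p))) (cbox c d)"
    using has_integral_integral_fst_continuous[OF cont_f]
    by (intro has_integral_diff has_integral_mult_right integrable_integral integrable_continuous)
      (simp_all add: cbox_interval)
  have "continuous_on (cbox (a, c) (b, d)) (\<lambda>p. fst p * (1 - fst p) * (g p)\<^sup>2)"
    by (intro continuous_intros cont_g)
  then show "((\<lambda>y. (L z + L (1 - z)) / (2 * l)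
        + l / 2 * integral {a..b} (\<lambda>s. s * (1 - s) * (g (s, y))\<^sup>2))
      has_integral measure lborel (cbox c d) * ((L z + L (1 - z)) / (2 * l))
        + l / 2 * integral (cbox (a, c) (b, d)) (\<lambda>p. fst p * (1 - fst p) * (g p)\<^sup>2)) (cbox c d)"
    using has_integral_const[of "(L z + L (1 - z)) / (2 * l)" c d]
    by (intro has_integral_add has_integral_mult_right)
      (auto simp: cbox_interval dest: has_integral_integral_fst_continuous)
next
  fix y assume y: "y \<in> cbox c d"
  have "continuous_on {a..b} (\<lambda>s. g (s, y))"
    by (rule continuous_on_compose2[OF cont_g])
      (use y in \<open>auto intro!: continuous_intros simp: cbox_Pair_eq\<close>)
  then have "(\<lambda>s. s * (1 - s) * (g (s, y))\<^sup>2) integrable_on {a..b}"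
    by (intro integrable_continuous_real continuous_intros)
  with y assms show "(b - a) * f z y - integral {a..b} (\<lambda>s. f s y)
      \<le> (L z + L (1 - z)) / (2 * l) + l / 2 * integral {a..b} (\<lambda>s. s * (1 - s) * (g (s, y))\<^sup>2)"
    by (intro deviation_le_interval[where h' = "\<lambda>s. g (s, y)"] der)
qed

lemma deviation_le_open_slab:
  fixes f :: "real \<Rightarrow> 'b::euclidean_space \<Rightarrow> real" and g :: "real \<times> 'b \<Rightarrow> real"
  assumes cont_f: "continuous_on ({0<..<1} \<times> cbox c d) (\<lambda>p. f (fst p) (snd p))"
    and cont_g: "continuous_on ({0<..<1} \<times> cbox c d) g"
    and der: "\<And>s y. s \<in> {0<..<1} \<Longrightarrow> y \<in> cbox c d \<Longrightarrow>
      ((\<lambda>t. f t y) has_real_derivative g (s, y)) (at s)"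
    and int_f: "(\<lambda>p. f (fst p) (snd p)) integrable_on ({0<..<1} \<times> cbox c d)"
    and int_g: "(\<lambda>p. fst p * (1 - fst p) * (g p)\<^sup>2) integrable_on ({0<..<1} \<times> cbox c d)"
    and "cbox c d \<noteq> {}" "0 < z" "z < 1" "0 < l"
  shows "integral (cbox c d) (f z) - integral ({0<..<1} \<times> cbox c d) (\<lambda>p. f (fst p) (snd p))
    \<le> measure lborel (cbox c d) * ((L z + L (1 - z)) / (2 * l))
      + l / 2 * integral ({0<..<1} \<times> cbox c d) (\<lambda>p. fst p * (1 - fst p) * (g p)\<^sup>2)"
    (is "?C - integral ?U ?F \<le> ?M + l / 2 * integral ?U ?E")
proof (rule tendsto_upperbound)
  let ?slab = "\<lambda>n. cbox (n, c) (1 - n, d)"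
  have F_closed: "(?F has_integral integral ?U ?F) (cbox (0, c) (1, d))"
    using int_f has_integral_open_slab_iff by blast
  have "((\<lambda>n. (1 - n - n) * ?C - integral (?slab n) ?F)
      \<longlongrightarrow> (1 - 0 - 0) * ?C - integral ?U ?F) (at_right 0)"
    using tendsto_integral_shrinking_slab[OF has_integral_integrable[OF F_closed] \<open>cbox c d \<noteq> {}\<close>]
      integral_unique[OF F_closed]
    by (intro tendsto_intros) auto
  then show "((\<lambda>n. (1 - n - n) * ?C - integral (?slab n) ?F)
      \<longlongrightarrow> ?C - integral ?U ?F) (at_right 0)"
    by simp
  show "\<forall>\<^sub>F n in at_right 0. (1 - n - n) * ?C - integral (?slab n) ?F \<le> ?M + l / 2 * integral ?U ?E"
  proof (rule eventually_at_rightI[of 0 "min z (1 - z)"])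
    fix n :: real assume n: "n \<in> {0<..<min z (1 - z)}"
    then have sub: "?slab n \<subseteq> ?U"
      by (auto simp: cbox_Pair_eq)
    have "(1 - n - n) * ?C - integral (?slab n) ?F \<le> ?M + l / 2 * integral (?slab n) ?E"
    proof (rule deviation_le_compact_slab)
      show "continuous_on (?slab n) ?F"
        by (rule continuous_on_subset[OF cont_f sub])
      show "continuous_on (?slab n) g"
        by (rule continuous_on_subset[OF cont_g sub])
      show "0 < n" "n \<le> z" "z \<le> 1 - n" "1 - n < 1"
        using n by auto
    next
      fix s y assume "s \<in> {n..1 - n}" "y \<in> cbox c d"
      with n show "((\<lambda>t. f t y) has_real_derivative g (s, y)) (at s within {n..1 - n})"
        by (auto intro: has_field_derivative_at_within[OF der])
    qed (fact \<open>0 < l\<close>)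
    also have "integral (?slab n) ?E \<le> integral ?U ?E"
    proof (rule integral_subset_le[OF sub _ int_g])
      show "?E integrable_on ?slab n"
        by (intro integrable_continuous continuous_intros continuous_on_subset[OF cont_g sub])
      show "\<forall>p\<in>?U. 0 \<le> ?E p"
        by auto
    qed
    finally show "(1 - n - n) * ?C - integral (?slab n) ?F \<le> ?M + l / 2 * integral ?U ?E"
      using \<open>0 < l\<close> by simp
  qed (use assms in simp)
qed simp

lemma deviation_le_sqrt_energy:
  fixes f :: "real \<Rightarrow> 'b::euclidean_space \<Rightarrow> real" and g :: "real \<times> 'b \<Rightarrow> real"
  assumes "continuous_on ({0<..<1} \<times> cbox c d) (\<lambda>p. f (fst p) (snd p))"
    and "continuous_on ({0<..<1} \<times> cbox c d) g"
    and "\<And>s y. s \<in> {0<..<1} \<Longrightarrow> y \<in> cbox c d \<Longrightarrow>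
      ((\<lambda>t. f t y) has_real_derivative g (s, y)) (at s)"
    and "(\<lambda>p. f (fst p) (snd p)) integrable_on ({0<..<1} \<times> cbox c d)"
    and int_g: "(\<lambda>p. fst p * (1 - fst p) * (g p)\<^sup>2) integrable_on ({0<..<1} \<times> cbox c d)"
    and "cbox c d \<noteq> {}" "0 < z" "z < 1"
  shows "integral (cbox c d) (f z) - integral ({0<..<1} \<times> cbox c d) (\<lambda>p. f (fst p) (snd p))
    \<le> sqrt (measure lborel (cbox c d) * (L z + L (1 - z)))
      * sqrt (integral ({0<..<1} \<times> cbox c d) (\<lambda>p. fst p * (1 - fst p) * (g p)\<^sup>2))"
proof (rule le_sqrt_mult_sqrtI)
  show "0 \<le> measure lborel (cbox c d) * (L z + L (1 - z))"
    using assms by (simp add: L_nonneg)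
  show "0 \<le> integral ({0<..<1} \<times> cbox c d) (\<lambda>p. fst p * (1 - fst p) * (g p)\<^sup>2)"
    using int_g by (rule integral_nonneg) auto
  fix l :: real assume "0 < l"
  from deviation_le_open_slab[OF assms this]
  show "integral (cbox c d) (f z) - integral ({0<..<1} \<times> cbox c d) (\<lambda>p. f (fst p) (snd p))
    \<le> measure lborel (cbox c d) * (L z + L (1 - z)) / (2 * l)
      + l / 2 * integral ({0<..<1} \<times> cbox c d) (\<lambda>p. fst p * (1 - fst p) * (g p)\<^sup>2)"
    by simp
qed

theorem lemma2p5:
  fixes f :: "real \<Rightarrow> real \<times> real \<Rightarrow> real" and z :: real and y :: "real \<times> real"
  assumes C1: "C1_on ({0<..<1} \<times> UNIV) (\<lambda>p. f (fst p) (snd p))"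
    and per: "\<And>s. s \<in> {0<..<1} \<Longrightarrow> torus_periodic (f s)"
    and int_f: "(\<lambda>p. f (fst p) (snd p)) integrable_on ({0<..<1} \<times> torus_dom)"
    and int_E: "(\<lambda>p. fst p * (1 - fst p) * \<bar>deriv (\<lambda>t. f t (snd p)) (fst p)\<bar>^2)
                  integrable_on ({0<..<1} \<times> torus_dom)"
    and z: "0 < z" "z < 1"
  shows "f z y - integral ({0<..<1} \<times> torus_dom) (\<lambda>p. f (fst p) (snd p))
         \<le> sqrt (L z + L (1 - z))
             * sqrt (integral ({0<..<1} \<times> torus_dom)
                 (\<lambda>p. fst p * (1 - fst p) * \<bar>deriv (\<lambda>t. f t (snd p)) (fst p)\<bar>^2))
           + f z y - integral torus_dom (\<lambda>y'. f z y')"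
proof -
  let ?K = "cbox (0::real, 0::real) (1, 1)"
  let ?U = "{0<..<1} \<times> ?K"
  obtain g where g_cont: "continuous_on ({0<..<1} \<times> UNIV) g"
    and g_der: "\<And>s y. (s, y) \<in> {0<..<1} \<times> UNIV \<Longrightarrow>
      ((\<lambda>t. f t y) has_real_derivative g (s, y)) (at s)"
    using C1_on_partial_derivative_fst[OF C1] by blast
  have energy_eq: "fst p * (1 - fst p) * \<bar>deriv (\<lambda>t. f t (snd p)) (fst p)\<bar>^2
      = fst p * (1 - fst p) * (g p)\<^sup>2" if "p \<in> ?U" for p
    using that DERIV_imp_deriv[OF g_der[of "fst p" "snd p"]] by auto
  have int_g: "(\<lambda>p. fst p * (1 - fst p) * (g p)\<^sup>2) integrable_on ?U"
    using int_E[unfolded torus_dom_def] energy_eq by (rule integrable_eq)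
  have energy_integral:
      "integral ?U (\<lambda>p. fst p * (1 - fst p) * \<bar>deriv (\<lambda>t. f t (snd p)) (fst p)\<bar>^2)
      = integral ?U (\<lambda>p. fst p * (1 - fst p) * (g p)\<^sup>2)"
    using energy_eq by (rule integral_cong)
  have cont: "continuous_on ?U (\<lambda>p. f (fst p) (snd p))" "continuous_on ?U g"
    by (auto intro: continuous_on_subset[OF C1_on_imp_continuous_on[OF C1]]
        continuous_on_subset[OF g_cont])
  have "measure lborel ?K = 1" "?K \<noteq> {}"
    by (simp_all only: content_Pair) (simp_all add: cbox_Pair_eq)
  with deviation_le_sqrt_energy[OF cont _ int_f[unfolded torus_dom_def] int_g] g_der z
  have "integral ?K (f z) - integral ?U (\<lambda>p. f (fst p) (snd p))
      \<le> sqrt (L z + L (1 - z)) * sqrt (integral ?U (\<lambda>p. fst p * (1 - fst p) * (g p)\<^sup>2))"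
    by simp
  then show ?thesis
    unfolding torus_dom_def energy_integral by linarith
qed

end
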